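(* Let $k\ge 2$ be a non-square integer, let $0=t_0<t_1<t_2<\cdots$ be the increasing enumeration of all nonnegative integers $t$ such that $kT_t$ is triangular, and let $r$ be the rank and $\kappa=t_{r-1}+t_r$ as in Theorem 1 (so that $t_n=2(\kappa+1)t_{n-r}-t_{n-2r}+\kappa$ for all $n\ge 2r$). Then for every integer $n\ge r$, $$\kappa\left(t_n+2t_nt_{n-r}+t_{n-r}\right)-\left(t_n-t_{n-r}\right)^2=t_rt_{r-1}.$$
   Context: $T_m=\frac{m(m+1)}{2}$ denotes the $m$-th triangular number; an integer is triangular if it equals $T_m$ for some integer $m\ge0$. Theorem 1 (referenced): for non-square $k\ge2$ there is a positive integer $r$ such that with $\kappa=t_{r-1}+t_r$ one has $\kappa=\xi_r-\xi_{r-1}-1$ (where $\xi_n\ge0$ satisfies $T_{\xi_n}=kT_{t_n}$), $(t_{2r}-t_{r-1})/t_r=2\kappa+3$, and $t_n=2(\kappa+1)t_{n-r}-t_{n-2r}+\kappa$ for all $n\ge 2r$. *)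

theory Defs
  imports Complex_Main "HOL-Library.Infinite_Set"
begin

definition Tri :: "nat \<Rightarrow> nat" where
  "Tri m = m * (m + 1) div 2"

definition triangular :: "nat \<Rightarrow> bool" where
  "triangular x \<longleftrightarrow> (\<exists>m. x = Tri m)"

definition tset :: "nat \<Rightarrow> nat set" where
  "tset k = {t. triangular (k * Tri t)}"

definition tseq :: "nat \<Rightarrow> nat \<Rightarrow> nat" where
  "tseq k n = enumerate (tset k) n"

text \<open>xi_n >= 0 with T_{xi_n} = k T_{t_n} (unique, as Tri is strictly increasing).\<close>
definition xi :: "nat \<Rightarrow> nat \<Rightarrow> nat" where
  "xi k n = (THE x. Tri x = k * Tri (tseq k n))"

end

theory Submission
  imports Defs
begin

(* Put u = 2t + 1. Then t lies in tset k iff u is an odd positive solution of the conic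
   X^2 = k u^2 + 1 - k (with X = 2 xi + 1). The hypothesis relating kappa to the xi's forces
   k q^2 = P^2 - 1 for P = t_{r-1} + t_r + 1 and q = t_r - t_{r-1}, so
   (u, X) |-> (P u + q X, P X + k q u) is an automorphism of the conic. It preserves odd positive
   solutions, is increasing, sends 1 to 2 t_r + 1, and every solution u >= 2 t_r + 1 lies in its
   image; hence it shifts the enumeration by r: 2 t_n + 1 = P (2 t_{n-r} + 1) + q X_{n-r}.
   Eliminating X_{n-r} with the conic equation gives the identity. *)

lemma brahmagupta_identity:
  fixes a b K u X :: "'a::comm_ring_1"
  shows "(a * X + K * b * u)^2 - K * (a * u + b * X)^2 = (a^2 - K * b^2) * (X^2 - K * u^2)"
  by (simp add: power2_eq_square algebra_simps)

lemma odd_combination: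
  fixes P q u X :: int
  assumes "odd u" "odd X" "odd (P + q)"
  shows "odd (P * u + q * X)"
proof -
  have "P * u + q * X = (P + q) + P * (u - 1) + q * (X - 1)"
    by (simp add: algebra_simps)
  then show ?thesis
    using assms by simp
qed

lemma enumeration_tail_eq:
  fixes f g :: "nat \<Rightarrow> 'a::linorder"
  assumes f: "strict_mono f" and g: "strict_mono g"
    and into: "range g \<subseteq> range f" and onto: "\<And>n. g 0 \<le> f n \<Longrightarrow> f n \<in> range g"
    and start: "f r = g 0"
  shows "f (r + j) = g j"
proof (induction j)
  case 0
  show ?case
    using start by simp
next
  case (Suc j)
  have "g (Suc j) \<in> range f"
    using into by blast
  then obtain m where m: "g (Suc j) = f m"
    by blast
  have "f (r + j) < f m"
    using Suc.IH m strict_mono_less[OF g, of j "Suc j"] by simp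
  then have "r + Suc j \<le> m"
    using strict_mono_less[OF f] by simp
  have "g 0 \<le> f (r + Suc j)"
    using start strict_mono_less_eq[OF f, of r "r + Suc j"] by simp
  then obtain i where i: "f (r + Suc j) = g i"
    using onto by blast
  have "g j < g i"
    using Suc.IH i strict_mono_less[OF f, of "r + j" "r + Suc j"] by simp
  then have "Suc j \<le> i"
    using strict_mono_less[OF g] by simp
  then have "g (Suc j) \<le> g i"
    using strict_mono_less_eq[OF g] by simp
  then have "f m \<le> f (r + Suc j)"
    using m i by simp
  then have "m \<le> r + Suc j"
    using strict_mono_less_eq[OF f] by simp
  with \<open>r + Suc j \<le> m\<close> show ?case
    using m by simp
qed

lemma enumerate_beyond_card:
  fixes S :: "nat set"
  assumes "finite S" "card S \<le> n"
  shows "enumerate S n = enumerate {} 0"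
  using assms
proof (induction n arbitrary: S)
  case (Suc n)
  show ?case
  proof (cases "S = {}")
    case True
    then show ?thesis
      using Suc.IH[of "{}"] by (simp add: enumerate_Suc)
  next
    case False
    then have "(LEAST n. n \<in> S) \<in> S"
      by (meson LeastI ex_in_conv)
    then have "card (S - {LEAST n. n \<in> S}) \<le> n"
      using Suc.prems by (simp add: card_Diff_singleton)
    then show ?thesis
      using Suc.IH[of "S - {LEAST n. n \<in> S}"] Suc.prems by (simp add: enumerate_Suc)
  qed
qed simp

definition conic_solutions :: "int \<Rightarrow> int set" where
  "conic_solutions K = {u. 0 \<le> u \<and> odd u \<and> (\<exists>X \<ge> 0. X^2 = K * u^2 + 1 - K)}"

lemma conic_root_odd:
  fixes K u X :: int
  assumes "odd u" "X^2 = K * u^2 + 1 - K"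
  shows "odd X"
proof -
  obtain v where "u = 2 * v + 1"
    using assms(1) by (rule oddE)
  then have "X^2 = 2 * (2 * K * v * (v + 1)) + 1"
    using assms(2) by (simp add: power2_eq_square algebra_simps)
  then have "odd (X^2)"
    by simp
  then show ?thesis
    by simp
qed

definition conic_root :: "int \<Rightarrow> int \<Rightarrow> int" where
  "conic_root K u = (THE X. 0 \<le> X \<and> X^2 = K * u^2 + 1 - K)"

lemma conic_root_eq:
  assumes "0 \<le> X" "X^2 = K * u^2 + 1 - K"
  shows "conic_root K u = X"
  unfolding conic_root_def
proof (rule the_equality)
  fix Y
  assume "0 \<le> Y \<and> Y^2 = K * u^2 + 1 - K"
  then show "Y = X"
    using assms power2_eq_iff_nonneg[of Y X] by simp
qed (use assms in simp)

lemma conic_root: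
  assumes "u \<in> conic_solutions K"
  shows "0 \<le> conic_root K u" and "(conic_root K u)^2 = K * u^2 + 1 - K" and "odd (conic_root K u)"
proof -
  obtain X where "0 \<le> X" "X^2 = K * u^2 + 1 - K"
    using assms unfolding conic_solutions_def by auto
  moreover have "odd u"
    using assms unfolding conic_solutions_def by simp
  then have "odd X"
    using calculation(2) by (rule conic_root_odd)
  ultimately show "0 \<le> conic_root K u" "(conic_root K u)^2 = K * u^2 + 1 - K" "odd (conic_root K u)"
    using conic_root_eq by simp_all
qed

lemma conic_root_mono:
  assumes "u \<in> conic_solutions K" "v \<in> conic_solutions K" "0 \<le> K" "u \<le> v"
  shows "conic_root K u \<le> conic_root K v"
proof (rule power2_le_imp_le)
  have "u^2 \<le> v^2"
    using assms unfolding conic_solutions_def by (auto intro: power_mono)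
  then show "(conic_root K u)^2 \<le> (conic_root K v)^2"
    using assms(1-3) by (simp add: conic_root mult_left_mono)
qed (use assms(2) conic_root in simp)

locale conic_automorphism =
  fixes K P q :: int
  assumes K_ge: "1 \<le> K" and P_ge: "1 \<le> P" and q_ge: "0 \<le> q"
    and norm: "K * q^2 = P^2 - 1" and odd_sum: "odd (P + q)"
begin

definition step :: "int \<Rightarrow> int" where
  "step u = P * u + q * conic_root K u"

lemma step_one: "step 1 = P + q"
  using conic_root_eq[of 1 K 1] unfolding step_def by simp

lemma step_in_solutions:
  assumes u: "u \<in> conic_solutions K"
  shows "step u \<in> conic_solutions K"
proof -
  define X where "X = conic_root K u"
  have u0: "0 \<le> u" and "odd u"
    using u unfolding conic_solutions_def by auto
  have X0: "0 \<le> X" and X: "X^2 = K * u^2 + 1 - K" and "odd X"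
    using conic_root[OF u] unfolding X_def by auto
  have "(P * X + K * q * u)^2 - K * (step u)^2 = X^2 - K * u^2"
    using brahmagupta_identity[of P X K q u] norm unfolding step_def X_def by simp
  then have "(P * X + K * q * u)^2 = K * (step u)^2 + 1 - K"
    using X by simp
  moreover have "0 \<le> P * X + K * q * u" and "0 \<le> step u"
    using P_ge q_ge K_ge X0 u0 unfolding step_def X_def by simp_all
  moreover have "odd (step u)"
    unfolding step_def X_def[symmetric] using \<open>odd u\<close> \<open>odd X\<close> odd_sum by (rule odd_combination)
  ultimately show ?thesis
    unfolding conic_solutions_def by blast
qed

lemma step_less:
  assumes "u \<in> conic_solutions K" "v \<in> conic_solutions K" "u < v"
  shows "step u < step v"
proof -
  have "q * conic_root K u \<le> q * conic_root K v"
    using conic_root_mono[of u K v] assms K_ge q_ge by (simp add: mult_left_mono)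
  moreover have "P * u < P * v"
    using assms(3) P_ge by simp
  ultimately show ?thesis
    unfolding step_def by simp
qed

lemma inverse_step_pos:
  assumes v: "v \<in> conic_solutions K" and "1 \<le> v"
  shows "q * conic_root K v < P * v"
proof (rule power2_less_imp_less)
  have "(q * conic_root K v)^2 = q^2 * (K * v^2 + 1 - K)"
    using conic_root(2)[OF v] by (simp add: power_mult_distrib)
  also have "\<dots> = (K * q^2) * v^2 - q^2 * (K - 1)"
    by (simp add: algebra_simps)
  also have "\<dots> = P^2 * v^2 - v^2 - q^2 * (K - 1)"
    unfolding norm by (simp add: algebra_simps)
  also have "\<dots> < (P * v)^2"
  proof -
    have "0 < v^2" "0 \<le> q^2 * (K - 1)"
      using \<open>1 \<le> v\<close> K_ge by simp_all
    then show ?thesis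
      unfolding power_mult_distrib by linarith
  qed
  finally show "(q * conic_root K v)^2 < (P * v)^2" .
qed (use assms P_ge in simp)

lemma inverse_root_nonneg:
  assumes v: "v \<in> conic_solutions K" and "P \<le> v"
  shows "K * q * v \<le> P * conic_root K v"
proof (rule power2_le_imp_le)
  have "P^2 \<le> v^2"
    using assms P_ge by (intro power_mono) simp_all
  then have "P^2 * (K - 1) \<le> v^2 * (K - 1)"
    using K_ge by (simp add: mult_right_mono)
  also have "\<dots> \<le> K * v^2"
    by (simp add: algebra_simps)
  finally have "P^2 * (K - 1) \<le> K * v^2" .
  have "(K * q * v)^2 = K * (K * q^2) * v^2"
    by (simp add: power_mult_distrib power2_eq_square)
  also have "\<dots> = K * P^2 * v^2 - K * v^2"
    unfolding norm by (simp add: algebra_simps)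
  also have "\<dots> \<le> K * P^2 * v^2 - P^2 * (K - 1)"
    using \<open>P^2 * (K - 1) \<le> K * v^2\<close> by simp
  also have "\<dots> = P^2 * (K * v^2 + 1 - K)"
    by (simp add: algebra_simps)
  also have "\<dots> = (P * conic_root K v)^2"
    using conic_root(2)[OF v] by (simp add: power_mult_distrib)
  finally show "(K * q * v)^2 \<le> (P * conic_root K v)^2" .
qed (use conic_root(1)[OF v] P_ge in simp)

lemma step_surj:
  assumes v: "v \<in> conic_solutions K" and "P + q \<le> v"
  shows "v \<in> step ` conic_solutions K"
proof -
  define Y where "Y = conic_root K v"
  define u where "u = P * v - q * Y"
  define X where "X = P * Y - K * q * v"
  have "0 < u"
    using inverse_step_pos[OF v] assms(2) P_ge q_ge unfolding u_def Y_def by simp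
  have "0 \<le> X"
    using inverse_root_nonneg[OF v] assms(2) q_ge unfolding X_def Y_def by simp
  have "X^2 - K * u^2 = Y^2 - K * v^2"
    using brahmagupta_identity[of P Y K "- q" v] norm unfolding X_def u_def by simp
  then have X: "X^2 = K * u^2 + 1 - K"
    using conic_root(2)[OF v] unfolding Y_def by simp
  have "odd (P * v + (- q) * Y)"
    using v conic_root(3)[OF v] odd_sum unfolding Y_def conic_solutions_def
    by (intro odd_combination) auto
  then have "odd u"
    unfolding u_def by simp
  then have u: "u \<in> conic_solutions K"
    using \<open>0 < u\<close> \<open>0 \<le> X\<close> X unfolding conic_solutions_def by auto
  have "step u = P * u + q * X"
    unfolding step_def using conic_root_eq[OF \<open>0 \<le> X\<close> X] by simp
  also have "\<dots> = (P^2 - K * q^2) * v"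
    unfolding u_def X_def by (simp add: power2_eq_square algebra_simps)
  also have "\<dots> = v"
    unfolding norm by simp
  finally show ?thesis
    using u by (metis image_eqI)
qed

lemma enumeration_shift:
  fixes U :: "nat \<Rightarrow> int"
  assumes mono: "strict_mono U" and range: "range U = conic_solutions K"
    and "U 0 = 1" and "U r = P + q"
  shows "U (r + j) = step (U j)"
proof -
  have U: "U n \<in> conic_solutions K" for n
    using range by blast
  have "strict_mono (step \<circ> U)"
  proof (rule strict_monoI)
    fix m n :: nat
    assume "m < n"
    then show "(step \<circ> U) m < (step \<circ> U) n"
      using step_less[OF U U] strict_mono_less[OF mono] by simp
  qed
  moreover have "range (step \<circ> U) \<subseteq> range U"
    using step_in_solutions[OF U] range by auto
  moreover have "U n \<in> range (step \<circ> U)" if "(step \<circ> U) 0 \<le> U n" for n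
  proof -
    have "P + q \<le> U n"
      using that \<open>U 0 = 1\<close> step_one by simp
    then have "U n \<in> step ` range U"
      unfolding range by (rule step_surj[OF U])
    then show ?thesis
      by (simp add: image_comp)
  qed
  moreover have "U r = (step \<circ> U) 0"
    using assms step_one by simp
  ultimately have "U (r + j) = (step \<circ> U) j"
    by (rule enumeration_tail_eq[OF mono])
  then show ?thesis
    by simp
qed

end

lemma conic_norm_from_roots:
  fixes K a b Xa Xb :: int
  assumes K: "2 \<le> K" and "a + b + 1 \<noteq> 0"
    and Xa: "Xa^2 = K * (2 * a + 1)^2 + 1 - K" and Xb: "Xb^2 = K * (2 * b + 1)^2 + 1 - K"
    and diff: "Xb - Xa = 2 * (a + b + 1)"
  shows "K * (b - a)^2 = (a + b + 1)^2 - 1"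
proof -
  have "2 * (a + b + 1) * (Xb + Xa) = (Xb - Xa) * (Xb + Xa)"
    using diff by simp
  also have "\<dots> = K * ((2 * b + 1)^2 - (2 * a + 1)^2)"
    using Xa Xb by (simp add: power2_eq_square algebra_simps)
  also have "\<dots> = 2 * (a + b + 1) * (2 * K * (b - a))"
    by (simp add: power2_eq_square algebra_simps)
  finally have "Xb + Xa = 2 * K * (b - a)"
    using \<open>a + b + 1 \<noteq> 0\<close> by simp
  then have "Xb = K * (b - a) + (a + b + 1)"
    using diff by simp
  with Xb have "(K * (b - a) + (a + b + 1))^2 = K * ((a + b + 1) + (b - a))^2 + 1 - K"
    by (simp add: algebra_simps)
  then have "(K - 1) * (K * (b - a)^2 - ((a + b + 1)^2 - 1)) = 0"
    by (simp add: power2_eq_square algebra_simps)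
  then show ?thesis
    using K by simp
qed

lemma conic_shift_identity:
  fixes K a b x y X :: int
  assumes norm: "K * (b - a)^2 = (a + b + 1)^2 - 1"
    and X: "X^2 = K * (2 * y + 1)^2 + 1 - K"
    and x: "2 * x + 1 = (a + b + 1) * (2 * y + 1) + (b - a) * X"
  shows "(a + b) * (x + 2 * x * y + y) - (x - y)^2 = b * a"
proof -
  have "(2 * x + 1 - (a + b + 1) * (2 * y + 1))^2 = (b - a)^2 * X^2"
    using x by (simp add: power_mult_distrib)
  also have "\<dots> = (K * (b - a)^2) * (2 * y + 1)^2 + (b - a)^2 - K * (b - a)^2"
    unfolding X by (simp add: algebra_simps)
  finally have sq: "(2 * x + 1 - (a + b + 1) * (2 * y + 1))^2
      = ((a + b + 1)^2 - 1) * (2 * y + 1)^2 + (b - a)^2 - ((a + b + 1)^2 - 1)"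
    unfolding norm .
  have "4 * ((a + b) * (x + 2 * x * y + y) - (x - y)^2) - 4 * (b * a)
      = ((a + b + 1)^2 - 1) * (2 * y + 1)^2 + (b - a)^2 - ((a + b + 1)^2 - 1)
        - (2 * x + 1 - (a + b + 1) * (2 * y + 1))^2"
    by (simp add: power2_eq_square algebra_simps)
  then show ?thesis
    unfolding sq by simp
qed

lemma Tri_odd_square: "8 * Tri m + 1 = (2 * m + 1)^2"
proof -
  have "2 * Tri m = m * (m + 1)"
    unfolding Tri_def by simp
  then show ?thesis
    by (simp add: power2_eq_square algebra_simps)
qed

lemma Tri_odd_square_int: "8 * int (Tri m) + 1 = (2 * int m + 1)^2"
  using arg_cong[OF Tri_odd_square[of m], of int] by (simp add: ac_simps)

lemma Tri_inj: "Tri a = Tri b \<Longrightarrow> a = b"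
  using Tri_odd_square[of a] Tri_odd_square[of b] by (simp add: power2_eq_iff_nonneg)

lemma Tri_mult_conic:
  assumes "Tri m = k * Tri t"
  shows "(2 * int m + 1)^2 = int k * (2 * int t + 1)^2 + 1 - int k"
proof -
  have "(2 * int m + 1)^2 = int k * (8 * int (Tri t)) + 1"
    using Tri_odd_square_int[of m] arg_cong[OF assms, of int] by simp
  also have "\<dots> = int k * (8 * int (Tri t) + 1) + 1 - int k"
    by (simp add: algebra_simps)
  also have "\<dots> = int k * (2 * int t + 1)^2 + 1 - int k"
    unfolding Tri_odd_square_int ..
  finally show ?thesis .
qed

lemma mem_tset_iff: "t \<in> tset k \<longleftrightarrow> 2 * int t + 1 \<in> conic_solutions (int k)"
proof
  assume "t \<in> tset k"
  then obtain m where "Tri m = k * Tri t"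
    unfolding tset_def triangular_def by auto
  then have "(2 * int m + 1)^2 = int k * (2 * int t + 1)^2 + 1 - int k"
    by (rule Tri_mult_conic)
  then show "2 * int t + 1 \<in> conic_solutions (int k)"
    unfolding conic_solutions_def by (auto intro!: exI[of _ "2 * int m + 1"])
next
  assume "2 * int t + 1 \<in> conic_solutions (int k)"
  then obtain X where X: "0 \<le> X" "X^2 = int k * (2 * int t + 1)^2 + 1 - int k"
    unfolding conic_solutions_def by auto
  have "odd X"
    using X(2) by (rule conic_root_odd[rotated]) simp
  then obtain m where m: "X = 2 * m + 1"
    by (rule oddE)
  have "8 * int (Tri (nat m)) + 1 = X^2"
    using X(1) m Tri_odd_square_int[of "nat m"] by simp
  also have "\<dots> = int k * (8 * int (Tri t)) + 1"
    unfolding X(2) Tri_odd_square_int[symmetric] by (simp add: algebra_simps)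
  finally have "int (Tri (nat m)) = int (k * Tri t)"
    by simp
  then have "k * Tri t = Tri (nat m)"
    by (simp only: of_nat_eq_iff)
  then show "t \<in> tset k"
    unfolding tset_def triangular_def by blast
qed

lemma conic_solutions_eq_image: "conic_solutions (int k) = (\<lambda>t. 2 * int t + 1) ` tset k"
proof
  show "conic_solutions (int k) \<subseteq> (\<lambda>t. 2 * int t + 1) ` tset k"
  proof
    fix u
    assume u: "u \<in> conic_solutions (int k)"
    then have "u = 2 * int (nat (u div 2)) + 1"
      unfolding conic_solutions_def by auto
    with u show "u \<in> (\<lambda>t. 2 * int t + 1) ` tset k"
      using mem_tset_iff by (metis image_eqI)
  qed
qed (auto simp: mem_tset_iff)

lemma tseq_in_tset: "infinite (tset k) \<Longrightarrow> tseq k n \<in> tset k"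
  unfolding tseq_def by (rule enumerate_in_set)

lemma infinite_tset:
  fixes \<kappa> :: int
  assumes kappa: "\<kappa> = int (tseq k (r - 1)) + int (tseq k r)"
    and ratio: "(real (tseq k (2 * r)) - real (tseq k (r - 1))) / real (tseq k r) = 2 * real_of_int \<kappa> + 3"
    and recur: "\<forall>n \<ge> 2 * r. int (tseq k n) = 2 * (\<kappa> + 1) * int (tseq k (n - r)) - int (tseq k (n - 2 * r)) + \<kappa>"
  shows "infinite (tset k)"
proof
  assume fin: "finite (tset k)"
  define L where "L = enumerate ({} :: nat set) 0"
  define n where "n = card (tset k) + 2 * r"
  have L: "tseq k m = L" if "card (tset k) \<le> m" for m
    using enumerate_beyond_card[OF fin that] unfolding tseq_def L_def .
  have "int (tseq k n) = 2 * (\<kappa> + 1) * int (tseq k (n - r)) - int (tseq k (n - 2 * r)) + \<kappa>"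
    using recur n_def by simp
  moreover have "tseq k n = L" "tseq k (n - r) = L" "tseq k (n - 2 * r) = L"
    using L n_def by simp_all
  ultimately have "int L = 2 * (\<kappa> + 1) * int L - int L + \<kappa>"
    by simp
  then have "\<kappa> * (2 * int L + 1) = 0"
    by (simp add: algebra_simps)
  then have "\<kappa> = 0"
    by simp
  then have "tseq k r = 0"
    using kappa by simp
  then show False
    using ratio \<open>\<kappa> = 0\<close> by simp
qed

lemma tseq_0: "tseq k 0 = 0"
proof -
  have "0 \<in> tset k"
    unfolding tset_def triangular_def Tri_def by (auto intro: exI[of _ 0])
  then show ?thesis
    unfolding tseq_def enumerate_0 by (simp add: Least_eq_0)
qed

lemma xi_conic_root:
  assumes "infinite (tset k)"
  shows "(2 * int (xi k n) + 1)^2 = int k * (2 * int (tseq k n) + 1)^2 + 1 - int k"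
proof -
  obtain m where m: "k * Tri (tseq k n) = Tri m"
    using tseq_in_tset[OF assms, of n] unfolding tset_def triangular_def by auto
  have "Tri (xi k n) = k * Tri (tseq k n)"
    unfolding xi_def by (rule theI[of _ m]) (use m Tri_inj in auto)
  then show ?thesis
    by (rule Tri_mult_conic)
qed

lemma tseq_shift:
  assumes inf: "infinite (tset k)" and "conic_automorphism (int k) P q"
    and "2 * int (tseq k r) + 1 = P + q"
  shows "2 * int (tseq k (r + j)) + 1 = conic_automorphism.step (int k) P q (2 * int (tseq k j) + 1)"
proof -
  interpret conic_automorphism "int k" P q
    by fact
  define U where "U m = 2 * int (tseq k m) + 1" for m
  have "strict_mono U"
  proof (rule strict_monoI)
    fix i j :: nat
    assume "i < j"
    then have "tseq k i < tseq k j"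
      using strict_mono_less[OF strict_mono_enumerate[OF inf]] unfolding tseq_def by simp
    then show "U i < U j"
      unfolding U_def by simp
  qed
  moreover have "range U = conic_solutions (int k)"
  proof -
    have tset: "range (tseq k) = tset k"
      unfolding tseq_def using inf by (rule range_enumerate)
    show ?thesis
      unfolding conic_solutions_eq_image U_def by (simp add: image_image flip: tset)
  qed
  moreover have "U 0 = 1" "U r = P + q"
    unfolding U_def tseq_0 using assms(3) by simp_all
  ultimately show ?thesis
    unfolding U_def by (rule enumeration_shift)
qed

theorem lemma2:
  fixes k r :: nat and \<kappa> :: int
  assumes k2: "k \<ge> 2"
    and nonsq: "\<not> (\<exists>m. k = m ^ 2)"
    and r_pos: "r \<ge> 1"
    and kappa_def: "\<kappa> = int (tseq k (r - 1)) + int (tseq k r)"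
    and kappa_xi: "\<kappa> = int (xi k r) - int (xi k (r - 1)) - 1"
    and ratio: "(real (tseq k (2 * r)) - real (tseq k (r - 1))) / real (tseq k r) = 2 * real_of_int \<kappa> + 3"
    and recur: "\<forall>n \<ge> 2 * r. int (tseq k n) = 2 * (\<kappa> + 1) * int (tseq k (n - r)) - int (tseq k (n - 2 * r)) + \<kappa>"
  shows "\<forall>n \<ge> r. \<kappa> * (int (tseq k n) + 2 * int (tseq k n) * int (tseq k (n - r)) + int (tseq k (n - r)))
                  - (int (tseq k n) - int (tseq k (n - r)))^2 = int (tseq k r) * int (tseq k (r - 1))"
proof (intro allI impI)
  fix n
  assume "r \<le> n"
  have inf: "infinite (tset k)"
    using kappa_def ratio recur by (rule infinite_tset)
  define a where "a = int (tseq k (r - 1))"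
  define b where "b = int (tseq k r)"
  define y where "y = int (tseq k (n - r))"
  have "0 \<le> a" "a < b"
    using r_pos inf unfolding a_def b_def tseq_def by simp_all
  have norm: "int k * (b - a)^2 = (a + b + 1)^2 - 1"
    using conic_norm_from_roots[OF _ _ xi_conic_root[OF inf] xi_conic_root[OF inf]] k2 \<open>0 \<le> a\<close> \<open>a < b\<close>
      kappa_def kappa_xi unfolding a_def b_def by simp
  have C: "conic_automorphism (int k) (a + b + 1) (b - a)"
    using k2 \<open>0 \<le> a\<close> \<open>a < b\<close> norm by unfold_locales simp_all
  have "2 * int (tseq k n) + 1 = conic_automorphism.step (int k) (a + b + 1) (b - a) (2 * y + 1)"
    using tseq_shift[OF inf C, of r "n - r"] \<open>r \<le> n\<close> unfolding b_def y_def by simp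
  moreover have "2 * y + 1 \<in> conic_solutions (int k)"
    using tseq_in_tset[OF inf] mem_tset_iff unfolding y_def by blast
  ultimately have "(a + b) * (int (tseq k n) + 2 * int (tseq k n) * y + y) - (int (tseq k n) - y)^2 = b * a"
    using conic_shift_identity[OF norm conic_root(2)] unfolding conic_automorphism.step_def[OF C] by simp
  then show "\<kappa> * (int (tseq k n) + 2 * int (tseq k n) * int (tseq k (n - r)) + int (tseq k (n - r)))
      - (int (tseq k n) - int (tseq k (n - r)))^2 = int (tseq k r) * int (tseq k (r - 1))"
    unfolding kappa_def a_def b_def y_def by (simp add: mult.commute)
qed

end
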